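(* Let $p\in\mathbb{C}[y]$ be monic of degree $M\ge1$ with no zeros in $\overline{\mathbb{H}}$. Let $A=\tfrac12(p+\bar p)$, $B=\tfrac1{2i}(p-\bar p)$, fix $t\in\mathbb{R}$, and let $a_1(t),\dots,a_M(t)$ be the (real, simple) roots of $A+tB$. For $1\le\mathfrak{p}\le\infty$ and $j=1,\dots,M$ set $$I_j(t,\mathfrak{p})=\left\|\frac{A+tB}{(\cdot-a_j(t))\,p}\right\|_{L^{\mathfrak{p}}(\mathbb{R},dy/\pi)}.$$ Let $1<\mathfrak{p}<\infty$ and $1/\mathfrak{p}+1/\mathfrak{p}'=1$. Then for every $Q\in\mathbb{C}[y]$ with $\deg Q<M$, $$\|Q/p\|_{L^{\mathfrak{p}}(\mathbb{R},dy/\pi)}\le M^{1/\mathfrak{p}'}\Bigl(\sum_{j=1}^M\Bigl|\frac{Q(a_j(t))}{A'(a_j(t))+tB'(a_j(t))}\Bigr|^{\mathfrak{p}}I_j(t,\mathfrak{p})^{\mathfrak{p}}\Bigr)^{1/\mathfrak{p}}$$ and $$\Bigl(\sum_{j=1}^M\frac{|Q(a_j(t))|^{\mathfrak{p}}}{|A'(a_j(t))+tB'(a_j(t))|^{\mathfrak{p}}}I_j(t,\mathfrak{p})^{\mathfrak{p}}\Bigr)^{1/\mathfrak{p}}\le\|Q/p\|_{L^{\mathfrak{p}}(\mathbb{R},dy/\pi)}\Bigl(\sum_{j=1}^M\frac{|B(a_j(t))|^{\mathfrak{p}}}{|A'(a_j(t))+tB'(a_j(t))|^{\mathfrak{p}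}}I_j(t,\mathfrak{p})^{\mathfrak{p}}I_j(t,\mathfrak{p}')^{\mathfrak{p}}\Bigr)^{1/\mathfrak{p}}.$$
   Context: $\mathbb{H}=\{\operatorname{Im}z>0\}$, $\overline{\mathbb{H}}$ its closure. For a one-variable polynomial, $\bar p(y)=\overline{p(\bar y)}$. Under the hypotheses, $A+tB$ has $M$ simple real roots and $A'+tB'$ is nonzero at them. $L^{\mathfrak{p}}(\mathbb{R},dy/\pi)$ uses the measure $dy/\pi$. *)

theory Defs
  imports "HOL-Analysis.Analysis" "HOL-Computational_Algebra.Polynomial"
begin

text \<open>Conjugate polynomial: coefficients conjugated, i.e. bar p (y) = conj (p (conj y)).\<close>
definition conj_poly :: "complex poly \<Rightarrow> complex poly" where
  "conj_poly p = map_poly cnj p"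

definition polyA :: "complex poly \<Rightarrow> complex poly" where
  "polyA p = smult (1/2) (p + conj_poly p)"

definition polyB :: "complex poly \<Rightarrow> complex poly" where
  "polyB p = smult (1 / (2 * \<i>)) (p - conj_poly p)"

definition Lp_norm_pi :: "real \<Rightarrow> (real \<Rightarrow> complex) \<Rightarrow> real" where
  "Lp_norm_pi r f = (integral\<^sup>L lborel (\<lambda>y. norm (f y) powr r / pi)) powr (1 / r)"

definition Ij :: "complex poly \<Rightarrow> real \<Rightarrow> real \<Rightarrow> real \<Rightarrow> real" where
  "Ij p t a r = Lp_norm_pi r (\<lambda>y. poly (polyA p + smult (of_real t) (polyB p)) (of_real y)
        / ((of_real y - of_real a) * poly p (of_real y)))"

definition real_roots_At :: "complex poly \<Rightarrow> real \<Rightarrow> real set" where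
  "real_roots_At p t = {a::real. poly (polyA p + smult (of_real t) (polyB p)) (of_real a) = 0}"

end

theory Submission
  imports Defs "HOL-Complex_Analysis.Complex_Analysis" "HOL-Probability.Sinc_Integral"
    "HOL-Computational_Algebra.Fundamental_Theorem_Algebra"
begin

text \<open>
  Write \<open>F = A + tB = u p + v p\<^sup>*\<close> with \<open>u = (1 - it)/2\<close> and \<open>v = (1 + it)/2 = cnj u\<close>.
  Since all zeros of \<open>p\<close> lie in the open lower half-plane, \<open>|p(cnj z)| < |p(z)|\<close> for \<open>Im z > 0\<close>
  and \<open>Im (p'/p) < 0\<close> on the real line; hence the zeros \<open>a\<^sub>j\<close> of \<open>F\<close> are real and simple, and
  there are \<open>M\<close> of them. Lagrange interpolation at these zeros writes \<open>Q/p\<close> as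
  \<open>\<Sum>\<^sub>j Q(a\<^sub>j)/F'(a\<^sub>j) \<cdot> F/((y - a\<^sub>j) p)\<close>, and the power-mean inequality gives the first
  estimate. For the second, a partial fraction decomposition and Cauchy's theorem on half-discs give
  \<open>\<pi> Q(a\<^sub>j) = B(a\<^sub>j) \<integral> Q F / ((y - a\<^sub>j) p p\<^sup>*) dy\<close>, and Hoelder's inequality bounds this
  integral by \<open>\<pi>\<close> times the \<open>L\<^sup>r\<close> norm of \<open>Q/p\<close> times \<open>I\<^sub>j(t, r')\<close>.
\<close>

section \<open>Integration on the real line\<close>

lemma integrable_one_plus_powr_atLeast_0:
  fixes s :: real
  assumes s: "s > 1"
  shows "integrable lborel (\<lambda>y::real. indicator {0..} y * (1 + y) powr (-s))"
proof (rule integrableI_nonneg)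
  show "(\<lambda>y::real. indicator {0..} y * (1 + y) powr (-s)) \<in> borel_measurable lborel"
    by measurable
  show "AE y in lborel. 0 \<le> indicator {0..} y * (1 + y) powr - s"
    by (auto simp: indicator_def)
  define F where "F = (\<lambda>x::real. (1 + x) powr (1 - s) / (1 - s))"
  have "(\<integral>\<^sup>+x. ennreal ((1 + x) powr (-s)) * indicator {0..} x \<partial>lborel) = 0 - F 0"
  proof (rule nn_integral_FTC_atLeast)
    show "DERIV F x :> (1 + x) powr - s" if "0 \<le> x" for x
    proof -
      have "(1 + x) powr (1 - s) = (1 + x) * (1 + x) powr (-s)"
        using that powr_add[of "1 + x" 1 "-s"] by simp
      then have "DERIV (\<lambda>x. (1 + x) powr (1 - s)) x :> (1 - s) * (1 + x) powr - s"
        using that by (auto intro!: derivative_eq_intros)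
      then show ?thesis
        unfolding F_def using DERIV_cdivide[where c = "1 - s"] s by fastforce
    qed
    have "((\<lambda>x::real. (1 + x) powr (1 - s)) \<longlongrightarrow> 0) at_top"
      using s by real_asymp
    then show "(F \<longlongrightarrow> 0) at_top"
      unfolding F_def by (rule tendsto_divide_zero)
  qed auto
  moreover have "(\<integral>\<^sup>+x. ennreal (indicator {0..} x * (1 + x) powr - s) \<partial>lborel)
      = (\<integral>\<^sup>+x. ennreal ((1 + x) powr (-s)) * indicator {0..} x \<partial>lborel)"
    by (rule nn_integral_cong) (simp add: indicator_def)
  ultimately show "(\<integral>\<^sup>+x. ennreal (indicator {0..} x * (1 + x) powr - s) \<partial>lborel) < \<infinity>"
    by simp
qed

lemma integrable_one_plus_abs_powr:
  fixes s :: real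
  assumes s: "s > 1"
  shows "integrable lborel (\<lambda>y::real. (1 + \<bar>y\<bar>) powr (-s))"
proof -
  let ?h = "\<lambda>y::real. indicator {0..} y * (1 + y) powr (-s)"
  have "integrable lborel ?h"
    by (rule integrable_one_plus_powr_atLeast_0[OF s])
  moreover from this have "integrable lborel (\<lambda>y. ?h (0 + (-1) * y))"
    by (rule lborel_integrable_real_affine) simp
  ultimately have "integrable lborel (\<lambda>y. ?h y + ?h (0 + (-1) * y))"
    by (rule Bochner_Integration.integrable_add)
  then show ?thesis
    by (rule Bochner_Integration.integrable_bound) (auto simp: indicator_def)
qed

lemma integrable_bounded_by_one_plus_abs_powr:
  fixes f :: "real \<Rightarrow> 'a::{banach,second_countable_topology}"
  assumes "s > 1" and "f \<in> borel_measurable lborel"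
    and bound: "\<And>y. norm (f y) \<le> K * (1 + \<bar>y\<bar>) powr (-s)"
  shows "integrable lborel f"
proof -
  have "integrable lborel (\<lambda>y::real. K * (1 + \<bar>y\<bar>) powr (-s))"
    using integrable_one_plus_abs_powr[OF \<open>s > 1\<close>] by simp
  then show ?thesis
    by (rule Bochner_Integration.integrable_bound)
       (use assms in \<open>auto intro: order_trans[OF _ abs_ge_self]\<close>)
qed

lemma LIMSEQ_integral_symmetric_interval:
  fixes f :: "real \<Rightarrow> 'a::euclidean_space"
  assumes f: "integrable lborel f"
  shows "(\<lambda>n::nat. integral {-real n..real n} f) \<longlonglongrightarrow> integral\<^sup>L lborel f"
proof -
  have fm: "f \<in> borel_measurable lborel"
    using f by auto
  have "(\<lambda>n::nat. integral\<^sup>L lborel (\<lambda>y. indicator {-real n..real n} y *\<^sub>R f y))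
          \<longlonglongrightarrow> integral\<^sup>L lborel f"
  proof (rule integral_dominated_convergence[where w = "\<lambda>y. norm (f y)"])
    show "AE y in lborel. (\<lambda>n. indicator {- real n..real n} y *\<^sub>R f y) \<longlonglongrightarrow> f y"
    proof (rule AE_I2)
      fix y :: real
      obtain N :: nat where N: "\<bar>y\<bar> \<le> real N"
        using real_nat_ceiling_ge by blast
      have "eventually (\<lambda>n. indicator {- real n..real n} y *\<^sub>R f y = f y) sequentially"
        using eventually_ge_at_top[of N] by eventually_elim (use N in \<open>auto simp: indicator_def\<close>)
      then show "(\<lambda>n. indicator {- real n..real n} y *\<^sub>R f y) \<longlonglongrightarrow> f y"
        by (rule tendsto_eventually)
    qed
  qed (use f fm in \<open>auto simp: indicator_def\<close>)
  moreover have "integral\<^sup>L lborel (\<lambda>y. indicator {-real n..real n} y *\<^sub>R f y)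
      = integral {-real n..real n} f" for n :: nat
  proof -
    have "set_integrable lborel {-real n..real n} f"
      unfolding set_integrable_def
      by (rule Bochner_Integration.integrable_bound[OF f]) (use fm in \<open>auto simp: indicator_def\<close>)
    then show ?thesis
      using set_borel_integral_eq_integral(2) by (simp add: set_lebesgue_integral_def)
  qed
  ultimately show ?thesis
    by simp
qed

lemma
  shows integrable_inverse_one_plus_square: "integrable lborel (\<lambda>y::real. inverse (1 + y\<^sup>2))"
    and integral_inverse_one_plus_square: "integral\<^sup>L lborel (\<lambda>y::real. inverse (1 + y\<^sup>2)) = pi"
  using integrable_inverse_1_plus_square LBINT_inverse_1_plus_square
  by (simp_all add: set_integrable_def interval_lebesgue_integral_def set_lebesgue_integral_def)

lemma integrable_Holder:
  fixes f g :: "'a \<Rightarrow> real" and p q :: real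
  assumes p: "p > 1" and q: "q > 1" and pq: "1/p + 1/q = 1"
    and "f \<in> borel_measurable M" and "g \<in> borel_measurable M"
    and f0: "\<And>x. f x \<ge> 0" and g0: "\<And>x. g x \<ge> 0"
    and "integrable M (\<lambda>x. f x powr p)" and "integrable M (\<lambda>x. g x powr q)"
  shows "integrable M (\<lambda>x. f x * g x)"
proof (rule Bochner_Integration.integrable_bound)
  show "integrable M (\<lambda>x. f x powr p / p + g x powr q / q)"
    using assms by auto
  show "AE x in M. norm (f x * g x) \<le> norm (f x powr p / p + g x powr q / q)"
    using Youngs_inequality[OF p q pq f0 g0] f0 g0 by (auto intro: order_trans[OF _ abs_ge_self])
qed (use assms in auto)

lemma integral_Holder:
  fixes f g :: "'a \<Rightarrow> real" and p q :: real
  assumes p: "p > 1" and q: "q > 1" and pq: "1/p + 1/q = 1"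
    and fm: "f \<in> borel_measurable M" and gm: "g \<in> borel_measurable M"
    and f0: "\<And>x. f x \<ge> 0" and g0: "\<And>x. g x \<ge> 0"
    and fi: "integrable M (\<lambda>x. f x powr p)" and gi: "integrable M (\<lambda>x. g x powr q)"
  shows "integral\<^sup>L M (\<lambda>x. f x * g x) \<le>
           (integral\<^sup>L M (\<lambda>x. f x powr p)) powr (1/p) * (integral\<^sup>L M (\<lambda>x. g x powr q)) powr (1/q)"
proof -
  define A where "A = integral\<^sup>L M (\<lambda>x. f x powr p)"
  define B where "B = integral\<^sup>L M (\<lambda>x. g x powr q)"
  have A0: "A \<ge> 0" and B0: "B \<ge> 0"
    unfolding A_def B_def by (auto intro: integral_nonneg_AE)
  have fgi: "integrable M (\<lambda>x. f x * g x)"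
    by (rule integrable_Holder[OF assms])
  show "integral\<^sup>L M (\<lambda>x. f x * g x) \<le> A powr (1/p) * B powr (1/q)"
  proof (cases "A = 0 \<or> B = 0")
    case True
    then have "AE x in M. f x * g x = 0"
      using integral_nonneg_eq_0_iff_AE[OF fi] integral_nonneg_eq_0_iff_AE[OF gi]
      unfolding A_def B_def by (auto elim: AE_mp)
    then have "integral\<^sup>L M (\<lambda>x. f x * g x) = 0"
      by (rule integral_eq_zero_AE)
    then show ?thesis
      by simp
  next
    case False
    then have Ap: "A > 0" and Bp: "B > 0"
      using A0 B0 by auto
    define a where "a = A powr (1/p)"
    define b where "b = B powr (1/q)"
    have ap: "a > 0" and bp: "b > 0"
      unfolding a_def b_def using Ap Bp by auto
    have "a powr p = A" and "b powr q = B"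
      unfolding a_def b_def using Ap Bp p q by (simp_all add: powr_powr)
    \<comment> \<open>Young's inequality for the normalised functions \<open>f/a\<close> and \<open>g/b\<close>\<close>
    then have young: "f x * g x / (a * b) \<le> f x powr p / (p * A) + g x powr q / (q * B)" for x
      using Youngs_inequality[OF p q pq, of "f x / a" "g x / b"] f0[of x] g0[of x] ap bp
      by (simp add: powr_divide field_simps)
    have "integral\<^sup>L M (\<lambda>x. f x * g x / (a * b)) \<le>
          integral\<^sup>L M (\<lambda>x. f x powr p / (p * A) + g x powr q / (q * B))"
      by (rule integral_mono) (use fgi fi gi young in auto)
    also have "\<dots> = 1"
      using fi gi Ap Bp p q pq unfolding A_def B_def by simp
    finally show ?thesis
      using ap bp unfolding a_def b_def by (simp add: pos_divide_le_eq)
  qed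
qed

lemma norm_sum_powr_le:
  fixes x :: "'a \<Rightarrow> 'b::real_normed_vector" and r :: real
  assumes fin: "finite A" and r: "r \<ge> 1" and card: "card A \<le> n"
  shows "norm (\<Sum>a\<in>A. x a) powr r \<le> real n powr (r - 1) * (\<Sum>a\<in>A. norm (x a) powr r)"
proof -
  define A' where "A' = {a\<in>A. x a \<noteq> 0}"
  have sums: "(\<Sum>a\<in>A. x a) = (\<Sum>a\<in>A'. x a)" "(\<Sum>a\<in>A. norm (x a) powr r) = (\<Sum>a\<in>A'. norm (x a) powr r)"
    unfolding A'_def by (auto intro: sum.mono_neutral_right[OF fin])
  show ?thesis
  proof (cases "A' = {}")
    case True
    then show ?thesis
      using sums by simp
  next
    case False
    define m where "m = real (card A')"
    have fin': "finite A'"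
      using fin by (simp add: A'_def)
    have m: "m > 0" and mn: "m \<le> real n"
      unfolding m_def using fin' False card card_mono[OF fin, of A'] by (auto simp: A'_def card_gt_0_iff)
    \<comment> \<open>Jensen's inequality for the convex function \<open>t powr r\<close> and the uniform weights \<open>1/m\<close>\<close>
    have "(\<lambda>t. t powr r) (\<Sum>a\<in>A'. (1/m) *\<^sub>R norm (x a)) \<le> (\<Sum>a\<in>A'. (1/m) * (\<lambda>t. t powr r) (norm (x a)))"
      using fin' False powr_convex[OF r] by (rule convex_on_sum) (use m in \<open>auto simp: m_def A'_def\<close>)
    then have "((\<Sum>a\<in>A'. norm (x a)) / m) powr r \<le> (\<Sum>a\<in>A'. norm (x a) powr r) / m"
      by (simp add: sum_divide_distrib[symmetric] sum_distrib_left[symmetric] divide_inverse mult.commute)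
    then have "(\<Sum>a\<in>A'. norm (x a)) powr r \<le> m powr (r - 1) * (\<Sum>a\<in>A'. norm (x a) powr r)"
      using m by (simp add: powr_divide sum_nonneg powr_diff field_simps)
    moreover have "norm (\<Sum>a\<in>A'. x a) powr r \<le> (\<Sum>a\<in>A'. norm (x a)) powr r"
      using r by (intro powr_mono2 norm_sum) auto
    moreover have "m powr (r - 1) \<le> real n powr (r - 1)"
      using m mn r by (intro powr_mono2) auto
    ultimately show ?thesis
      unfolding sums by (meson order_trans mult_right_mono sum_nonneg powr_ge_zero)
  qed
qed

lemma sum_powr_root_le:
  fixes x y w :: "'a \<Rightarrow> real"
  assumes r: "r > 0" and N: "N \<ge> 0"
    and x: "\<And>a. a \<in> A \<Longrightarrow> 0 \<le> x a \<and> x a \<le> N * y a"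
    and y: "\<And>a. a \<in> A \<Longrightarrow> 0 \<le> y a" and w: "\<And>a. a \<in> A \<Longrightarrow> 0 \<le> w a"
  shows "(\<Sum>a\<in>A. x a powr r * w a) powr (1/r) \<le> N * (\<Sum>a\<in>A. y a powr r * w a) powr (1/r)"
proof -
  have "(\<Sum>a\<in>A. x a powr r * w a) \<le> (\<Sum>a\<in>A. (N * y a) powr r * w a)"
    using x w r by (intro sum_mono mult_right_mono powr_mono2) auto
  also have "\<dots> = N powr r * (\<Sum>a\<in>A. y a powr r * w a)"
    using N y by (simp add: powr_mult sum_distrib_left mult.assoc)
  finally have "(\<Sum>a\<in>A. x a powr r * w a) powr (1/r) \<le> (N powr r * (\<Sum>a\<in>A. y a powr r * w a)) powr (1/r)"
    using x w r by (intro powr_mono2) (auto intro!: sum_nonneg)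
  also have "\<dots> = N * (\<Sum>a\<in>A. y a powr r * w a) powr (1/r)"
    using N y w r by (simp add: powr_mult powr_powr sum_nonneg)
  finally show ?thesis .
qed

section \<open>Decay of rational functions\<close>

lemma eventually_norm_poly_ge:
  fixes D :: "'a::real_normed_field poly"
  assumes "D \<noteq> 0"
  shows "\<forall>\<^sub>F z in at_infinity. norm (lead_coeff D) / 2 * norm z ^ degree D \<le> norm (poly D z)"
proof -
  have "((\<lambda>z. norm (poly D z / z ^ degree D)) \<longlongrightarrow> norm (lead_coeff D)) at_infinity"
    by (intro tendsto_norm poly_divide_tendsto_aux)
  then have "\<forall>\<^sub>F z in at_infinity. norm (lead_coeff D) / 2 < norm (poly D z / z ^ degree D)"
    using assms by (intro order_tendstoD(1)) auto
  moreover have "\<forall>\<^sub>F z in at_infinity. z \<noteq> 0"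
    by (rule eventually_at_infinityI[of 1]) auto
  ultimately show ?thesis
    by eventually_elim (auto simp: norm_divide norm_power field_simps)
qed

lemma eventually_norm_poly_le:
  fixes N :: "'a::real_normed_field poly"
  shows "\<forall>\<^sub>F z in at_infinity. norm (poly N z) \<le> (norm (lead_coeff N) + 1) * norm z ^ degree N"
proof -
  have "((\<lambda>z. norm (poly N z / z ^ degree N)) \<longlongrightarrow> norm (lead_coeff N)) at_infinity"
    by (intro tendsto_norm poly_divide_tendsto_aux)
  then have "\<forall>\<^sub>F z in at_infinity. norm (poly N z / z ^ degree N) < norm (lead_coeff N) + 1"
    by (intro order_tendstoD(2)) auto
  moreover have "\<forall>\<^sub>F z in at_infinity. z \<noteq> 0"
    by (rule eventually_at_infinityI[of 1]) auto
  ultimately show ?thesis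
    by eventually_elim (auto simp: norm_divide norm_power field_simps)
qed

lemma rational_function_bounded_at_infinity:
  fixes N D :: "'a::real_normed_field poly"
  assumes D: "D \<noteq> 0" and deg: "degree N + k \<le> degree D"
  obtains R C where "\<And>z. norm z \<ge> R \<Longrightarrow> norm (poly N z / poly D z) * (1 + norm z) ^ k \<le> C"
proof -
  define c where "c = norm (lead_coeff D) / 2"
  define C where "C = norm (lead_coeff N) + 1"
  have c: "c > 0" and C: "C > 0"
    using D by (simp_all add: c_def C_def add_nonneg_pos)
  have "\<forall>\<^sub>F z in at_infinity. 1 \<le> norm (z::'a)"
    by (rule eventually_at_infinityI[of 1]) auto
  then have "\<forall>\<^sub>F z in at_infinity. c * norm z ^ degree D \<le> norm (poly D z)
          \<and> norm (poly N z) \<le> C * norm z ^ degree N \<and> 1 \<le> norm z"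
    using eventually_norm_poly_ge[OF D] eventually_norm_poly_le[of N]
    by eventually_elim (simp add: c_def C_def)
  then obtain R where R: "\<And>z. norm z \<ge> R \<Longrightarrow> c * norm z ^ degree D \<le> norm (poly D z)
          \<and> norm (poly N z) \<le> C * norm z ^ degree N \<and> 1 \<le> norm z"
    by (auto simp: eventually_at_infinity)
  show ?thesis
  proof (rule that[of R "C * 2 ^ k / c"])
    fix z :: 'a
    assume "norm z \<ge> R"
    note Rz = R[OF this]
    have "norm (poly N z) * (1 + norm z) ^ k \<le> C * norm z ^ degree N * (2 * norm z) ^ k"
      using Rz C by (intro mult_mono power_mono) auto
    also have "\<dots> = C * 2 ^ k * norm z ^ (degree N + k)"
      by (simp add: power_add power_mult_distrib)
    also have "\<dots> \<le> C * 2 ^ k * norm z ^ degree D"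
      using Rz deg C by (intro mult_left_mono power_increasing) auto
    also have "\<dots> \<le> C * 2 ^ k / c * norm (poly D z)"
      using Rz c C by (simp add: field_simps)
    finally have "norm (poly N z) * (1 + norm z) ^ k \<le> C * 2 ^ k / c * norm (poly D z)" .
    moreover have "0 < c * norm z ^ degree D"
      using Rz c by (simp add: less_le_trans[OF zero_less_one])
    then have "0 < norm (poly D z)"
      using Rz by linarith
    ultimately show "norm (poly N z / poly D z) * (1 + norm z) ^ k \<le> C * 2 ^ k / c"
      by (simp add: norm_divide pos_divide_le_eq)
  qed
qed

lemma rational_function_decay:
  fixes N D :: "complex poly"
  assumes D: "D \<noteq> 0" and deg: "degree N + k \<le> degree D"
    and T: "closed T" and nz: "\<And>z. z \<in> T \<Longrightarrow> poly D z \<noteq> 0"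
  obtains K where "\<And>z. z \<in> T \<Longrightarrow> norm (poly N z / poly D z) \<le> K / (1 + norm z) ^ k"
proof -
  define g where "g = (\<lambda>z. norm (poly N z / poly D z) * (1 + norm z) ^ k)"
  obtain R C where far: "\<And>z. norm z \<ge> R \<Longrightarrow> g z \<le> C"
    using rational_function_bounded_at_infinity[OF D deg] unfolding g_def by blast
  have "compact (g ` (T \<inter> cball 0 R))"
    using T nz unfolding g_def
    by (intro compact_continuous_image continuous_intros closed_Int_compact) auto
  then obtain B where "\<forall>x \<in> g ` (T \<inter> cball 0 R). norm x \<le> B"
    using compact_imp_bounded bounded_iff by blast
  then have near: "g z \<le> B" if "z \<in> T \<inter> cball 0 R" for z
    using that by (metis imageI real_norm_def abs_le_D1)
  show ?thesis
  proof (rule that[of "max B C"])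
    fix z assume "z \<in> T"
    then have "g z \<le> max B C"
      using near[of z] far[of z] by (cases "norm z \<le> R") auto
    then show "norm (poly N z / poly D z) \<le> max B C / (1 + norm z) ^ k"
      unfolding g_def by (simp add: field_simps add_pos_nonneg)
  qed
qed

lemma borel_measurable_poly_of_real [measurable]:
  "(\<lambda>y::real. poly (q :: complex poly) (of_real y)) \<in> borel_measurable borel"
  by (intro borel_measurable_continuous_onI continuous_intros)

lemma integrable_norm_rational_powr:
  fixes N D :: "complex poly"
  assumes nz: "\<And>x::real. poly D x \<noteq> 0" and deg: "degree N < degree D" and s: "s > 1"
  shows "integrable lborel (\<lambda>y::real. norm (poly N y / poly D y) powr s)"
proof -
  have "D \<noteq> 0"
    using nz[of 0] by auto
  moreover have "poly D z \<noteq> 0" if "z \<in> \<real>" for z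
    using nz that by (auto elim: Reals_cases)
  ultimately obtain K where K: "\<And>z. z \<in> \<real> \<Longrightarrow> norm (poly N z / poly D z) \<le> K / (1 + norm z) ^ 1"
    using rational_function_decay[of D N 1 \<real>] deg closed_complex_Reals by auto
  have bound: "norm (poly N y / poly D y) \<le> K / (1 + \<bar>y\<bar>)" for y :: real
    using K[of "of_real y"] by simp
  then have "K \<ge> 0"
    using order_trans[OF norm_ge_zero bound[of 0]] by simp
  have "norm (poly N y / poly D y) powr s \<le> (K / (1 + \<bar>y\<bar>)) powr s" for y :: real
    using bound s by (intro powr_mono2) auto
  also have "(K / (1 + \<bar>y\<bar>)) powr s = K powr s * (1 + \<bar>y\<bar>) powr (-s)" for y :: real
    using \<open>K \<ge> 0\<close> by (simp add: powr_divide powr_minus_divide)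
  finally show ?thesis
    using s by (intro integrable_bounded_by_one_plus_abs_powr[of s _ "K powr s"]) auto
qed

section \<open>Integrals of rational functions over the real line\<close>

lemma poly_no_roots_near_upper_halfplane:
  fixes D :: "complex poly"
  assumes D: "D \<noteq> 0" and nz: "\<And>z. Im z \<ge> 0 \<Longrightarrow> poly D z \<noteq> 0"
  obtains \<epsilon> where "\<epsilon> > 0" and "\<And>z. Im z > -\<epsilon> \<Longrightarrow> poly D z \<noteq> 0"
proof
  define \<epsilon> where "\<epsilon> = Min (insert 1 ((\<lambda>z. - Im z) ` {z. poly D z = 0}))"
  have fin: "finite {z. poly D z = 0}"
    by (rule poly_roots_finite[OF D])
  have "Im z < 0" if "poly D z = 0" for z
    using nz[of z] that by force
  then show "\<epsilon> > 0"
    unfolding \<epsilon>_def using fin by auto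
  show "poly D z \<noteq> 0" if "Im z > -\<epsilon>" for z
    using that fin Min_le[of "insert 1 ((\<lambda>z. - Im z) ` {z. poly D z = 0})" "- Im z"]
    unfolding \<epsilon>_def by auto
qed

lemma norm_integral_interval_le_semicircle:
  fixes f :: "complex \<Rightarrow> complex" and R B :: real
  assumes holo: "f holomorphic_on S" and S: "open S" "convex S" and H: "{z. Im z \<ge> 0} \<subseteq> S"
    and R: "R > 0" and bound: "\<And>z. Im z \<ge> 0 \<Longrightarrow> norm z = R \<Longrightarrow> norm (f z) \<le> B"
  shows "norm (integral {-R..R} (\<lambda>x. f (of_real x))) \<le> B * R * pi"
proof -
  define g1 where "g1 = linepath (- complex_of_real R) (complex_of_real R)"
  define g2 where "g2 = part_circlepath 0 R 0 pi"
  have "path_image g1 \<subseteq> {z. Im z \<ge> 0}"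
    unfolding g1_def path_image_linepath
    by (intro closed_segment_subset convex_halfspace_Im_ge) auto
  then have g1: "valid_path g1" "path_image g1 \<subseteq> S"
    using H by (auto simp: g1_def)
  have g2_upper: "Im z \<ge> 0 \<and> norm z = R" if z: "z \<in> path_image g2" for z
  proof -
    obtain x where "0 \<le> x" "x \<le> pi" and "z = R * exp (\<i> * of_real x)"
      using z path_image_part_circlepath[of 0 pi 0 R] by (auto simp: g2_def)
    then show ?thesis
      using R by (simp add: Im_exp sin_ge_zero norm_mult)
  qed
  then have g2: "valid_path g2" "path_image g2 \<subseteq> S"
    using H by (auto simp: g2_def)
  have int: "f contour_integrable_on g1" "f contour_integrable_on g2"
    using contour_integrable_holomorphic_simple[OF holo S(1)] g1 g2 by auto
  have "valid_path (g1 +++ g2)" "path_image (g1 +++ g2) \<subseteq> S"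
    "pathfinish (g1 +++ g2) = pathstart (g1 +++ g2)"
    using g1 g2 path_image_join_subset[of g1 g2] by (auto simp: g1_def g2_def)
  then have "(f has_contour_integral 0) (g1 +++ g2)"
    by (rule Cauchy_theorem_convex_simple[OF holo S(2)])
  moreover have "(f has_contour_integral (contour_integral g1 f + contour_integral g2 f)) (g1 +++ g2)"
    using has_contour_integral_join[OF has_contour_integral_integral[OF int(1)]
            has_contour_integral_integral[OF int(2)] g1(1) g2(1)] .
  ultimately have "contour_integral g1 f = - contour_integral g2 f"
    using has_contour_integral_unique by (simp add: eq_neg_iff_add_eq_0)
  moreover have "contour_integral g1 f = integral {-R..R} (\<lambda>x. f (of_real x))"
    unfolding g1_def using contour_integral_linepath_Reals_eq[of "- complex_of_real R" "complex_of_real R" f] R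
    by simp
  moreover have "B \<ge> 0"
    using bound[of "of_real R"] R by (smt (verit) norm_ge_zero Im_complex_of_real norm_of_real)
  then have "norm (contour_integral g2 f) \<le> B * R * \<bar>pi - 0\<bar>"
    unfolding g2_def using int(2) R bound g2_upper
    by (intro contour_integral_bound_part_circlepath) (auto simp: g2_def)
  ultimately show ?thesis
    by simp
qed

lemma integrable_rational_upper_halfplane:
  fixes N D :: "complex poly"
  assumes D: "D \<noteq> 0" and deg: "degree N + 2 \<le> degree D"
    and nz: "\<And>z. Im z \<ge> 0 \<Longrightarrow> poly D z \<noteq> 0"
  shows "integrable lborel (\<lambda>y::real. poly N y / poly D y)"
proof -
  obtain K where K: "\<And>z. Im z \<ge> 0 \<Longrightarrow> norm (poly N z / poly D z) \<le> K / (1 + norm z) ^ 2"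
    using rational_function_decay[OF D deg, of "{z. Im z \<ge> 0}"] nz by (auto simp: closed_halfspace_Im_ge)
  have "norm (poly N y / poly D y) \<le> K * (1 + \<bar>y\<bar>) powr (-2)" for y :: real
    using K[of "of_real y"] by (simp add: powr_minus powr_realpow divide_inverse)
  then show ?thesis
    by (intro integrable_bounded_by_one_plus_abs_powr[of 2]) auto
qed

lemma integral_rational_upper_halfplane_eq_0:
  fixes N D :: "complex poly"
  assumes D: "D \<noteq> 0" and deg: "degree N + 2 \<le> degree D"
    and nz: "\<And>z. Im z \<ge> 0 \<Longrightarrow> poly D z \<noteq> 0"
  shows "integral\<^sup>L lborel (\<lambda>y::real. poly N y / poly D y) = 0"
proof -
  define f where "f = (\<lambda>z. poly N z / poly D z)"
  obtain K where K: "\<And>z. Im z \<ge> 0 \<Longrightarrow> norm (f z) \<le> K / (1 + norm z) ^ 2"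
    using rational_function_decay[OF D deg, of "{z. Im z \<ge> 0}"] nz
    unfolding f_def by (auto simp: closed_halfspace_Im_ge)
  obtain \<epsilon> where "\<epsilon> > 0" and \<epsilon>: "\<And>z. Im z > -\<epsilon> \<Longrightarrow> poly D z \<noteq> 0"
    using poly_no_roots_near_upper_halfplane[OF D nz] by blast
  have holo: "f holomorphic_on {z. Im z > -\<epsilon>}"
    unfolding f_def using \<epsilon> by (auto intro!: holomorphic_intros)
  have S: "open {z. Im z > -\<epsilon>}" "convex {z. Im z > -\<epsilon>}" "{z. Im z \<ge> 0} \<subseteq> {z. Im z > -\<epsilon>}"
    using \<open>\<epsilon> > 0\<close> by (auto simp: open_halfspace_Im_gt convex_halfspace_Im_gt)
  have "norm (integral {-real n..real n} (\<lambda>y. f (of_real y))) \<le> K / (1 + real n) ^ 2 * real n * pi"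
    if "n \<ge> 1" for n :: nat
  proof (rule norm_integral_interval_le_semicircle[OF holo S])
    show "real n > 0"
      using that by simp
    show "norm (f z) \<le> K / (1 + real n) ^ 2" if "Im z \<ge> 0" "norm z = real n" for z
      using K[OF that(1)] that(2) by simp
  qed
  then have "\<forall>\<^sub>F n in sequentially. norm (integral {-real n..real n} (\<lambda>y. f (of_real y)))
      \<le> K / (1 + real n) ^ 2 * real n * pi"
    by (blast intro: eventually_mono[OF eventually_ge_at_top[of "1::nat"]])
  moreover have "(\<lambda>n. K / (1 + real n) ^ 2 * real n * pi) \<longlonglongrightarrow> 0"
    by real_asymp
  ultimately have "(\<lambda>n::nat. integral {-real n..real n} (\<lambda>y. f (of_real y))) \<longlonglongrightarrow> 0"
    by (rule Lim_null_comparison)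
  moreover have "integrable lborel (\<lambda>y::real. f (of_real y))"
    unfolding f_def by (rule integrable_rational_upper_halfplane[OF D deg nz])
  ultimately show ?thesis
    using LIMSEQ_unique[OF LIMSEQ_integral_symmetric_interval] unfolding f_def by blast
qed

lemma synthetic_div_mult_eq:
  fixes F :: "'a::comm_ring_1 poly"
  assumes "poly F c = 0"
  shows "[:-c, 1:] * synthetic_div F c = F"
  using synthetic_div_correct'[of c F] assms by simp

lemma poly_synthetic_div_root:
  fixes F :: "'a::idom poly"
  assumes "poly F c = 0"
  shows "poly (synthetic_div F c) c = poly (pderiv F) c"
proof -
  have "pderiv F = [:-c, 1:] * pderiv (synthetic_div F c) + synthetic_div F c * pderiv [:-c, 1:]"
    by (subst synthetic_div_mult_eq[OF assms, symmetric]) (rule pderiv_mult)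
  then show ?thesis
    by (simp add: pderiv_pCons)
qed

lemma poly_synthetic_div_mult:
  fixes F :: "'a::comm_ring_1 poly"
  assumes "poly F c = 0"
  shows "poly (synthetic_div F c) w * (w - c) = poly F w"
  using arg_cong[OF synthetic_div_mult_eq[OF assms], of "\<lambda>q. poly q w"] by (simp add: algebra_simps)

lemma coeff_conj_poly: "coeff (conj_poly p) n = cnj (coeff p n)"
  unfolding conj_poly_def by (simp add: coeff_map_poly)

lemma degree_conj_poly [simp]: "degree (conj_poly p) = degree p"
  unfolding conj_poly_def by (rule degree_map_poly) simp

lemma poly_conj_poly: "poly (conj_poly p) z = cnj (poly p (cnj z))"
  unfolding conj_poly_def by simp

lemma poly_conj_poly_of_real [simp]: "poly (conj_poly p) (of_real x) = cnj (poly p (of_real x))"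
  by (simp add: poly_conj_poly)

lemma pderiv_conj_poly: "pderiv (conj_poly p) = conj_poly (pderiv p)"
  by (rule poly_eqI) (simp add: coeff_pderiv coeff_conj_poly)

lemma difference_quotient_upper_eq_rational:
  fixes P Q :: "complex poly" and a :: real
  assumes nz: "\<And>z. Im z \<ge> 0 \<Longrightarrow> poly P z \<noteq> 0" and deg: "degree Q < degree P"
  obtains D N :: "complex poly"
  where "D \<noteq> 0" and "degree N + 2 \<le> degree D" and "\<forall>z. Im z \<ge> 0 \<longrightarrow> poly D z \<noteq> 0"
    and "\<forall>y::real. y \<noteq> a \<longrightarrow> (poly Q y / poly P y - poly Q a / poly P a) / (of_real y - of_real a)
           + poly Q a / (poly P a * (of_real y + \<i>)) = poly N y / poly D y"
proof -
  \<comment> \<open>The correction term cancels the \<open>1/y\<close> tail of the difference quotient, which is what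
      makes the degree gap 2.\<close>
  define c where "c = poly Q a / poly P a"
  define Y where "Y = Q * [:\<i>, 1:] - smult (c * (\<i> + a)) P"
  define N where "N = synthetic_div Y a"
  define D where "D = P * [:\<i>, 1:]"
  have "P \<noteq> 0"
    using nz[of 0] by auto
  have "poly Y a = 0"
    using nz[of a] by (simp add: Y_def c_def field_simps)
  then have NY: "[:- of_real a, 1:] * N = Y"
    unfolding N_def by (rule synthetic_div_mult_eq)
  have "degree (Q * [:\<i>, 1:]) \<le> degree P"
    using deg by (intro order_trans[OF degree_mult_le]) simp
  then have "degree Y \<le> degree P"
    unfolding Y_def by (rule degree_diff_le[OF _ order_trans[OF degree_smult_le]]) simp
  moreover have degD: "degree D = degree P + 1"
    unfolding D_def using \<open>P \<noteq> 0\<close> degree_mult_eq[of P "[:\<i>, 1:]"] by (simp del: mult_pCons_right)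
  ultimately have degND: "degree N + 2 \<le> degree D"
    using deg by (simp add: N_def degree_synthetic_div)
  have D0: "D \<noteq> 0"
    using degD by auto
  have nzD: "\<forall>z. Im z \<ge> 0 \<longrightarrow> poly D z \<noteq> 0"
  proof (intro allI impI)
    fix z :: complex
    assume "Im z \<ge> 0"
    moreover from this have "\<i> + z \<noteq> 0"
      by (auto simp: complex_eq_iff)
    ultimately show "poly D z \<noteq> 0"
      using nz by (simp add: D_def distrib_right[symmetric])
  qed
  have "\<forall>y::real. y \<noteq> a \<longrightarrow> (poly Q y / poly P y - poly Q a / poly P a) / (of_real y - of_real a)
      + poly Q a / (poly P a * (of_real y + \<i>)) = poly N y / poly D y"
  proof (intro allI impI)
    fix y :: real
    assume "y \<noteq> a"
    define w where "w = complex_of_real y"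
    have ne: "poly P w \<noteq> 0" "w + \<i> \<noteq> 0" "w - of_real a \<noteq> 0"
      using nz[of w] \<open>y \<noteq> a\<close> by (auto simp: w_def complex_eq_iff)
    have NYw: "poly N w * (w - of_real a) = poly Q w * (w + \<i>) - c * ((w + \<i>) - (w - of_real a)) * poly P w"
      using arg_cong[OF NY, of "\<lambda>q. poly q w"] by (simp add: Y_def algebra_simps)
    have "(poly Q y / poly P y - poly Q a / poly P a) / (of_real y - of_real a) + poly Q a / (poly P a * (of_real y + \<i>))
        = (poly Q w / poly P w - c) / (w - of_real a) + c / (w + \<i>)"
      by (simp add: c_def w_def)
    also have "\<dots> = (poly Q w * (w + \<i>) - c * ((w + \<i>) - (w - of_real a)) * poly P w)
                      / (poly P w * (w + \<i>) * (w - of_real a))"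
      using ne by (simp add: field_simps)
    also have "\<dots> = poly N w / (poly P w * (w + \<i>))"
      unfolding NYw[symmetric] using ne by simp
    also have "\<dots> = poly N y / poly D y"
      by (simp add: D_def w_def algebra_simps)
    finally show "(poly Q y / poly P y - poly Q a / poly P a) / (of_real y - of_real a)
      + poly Q a / (poly P a * (of_real y + \<i>)) = poly N y / poly D y" .
  qed
  then show ?thesis
    by (rule that[OF D0 degND nzD])
qed

lemma
  fixes P Q :: "complex poly" and a :: real
  assumes nz: "\<And>z. Im z \<ge> 0 \<Longrightarrow> poly P z \<noteq> 0" and deg: "degree Q < degree P"
  defines "h \<equiv> \<lambda>y::real. (poly Q y / poly P y - poly Q a / poly P a) / (of_real y - of_real a)
                 + poly Q a / (poly P a * (of_real y + \<i>))"
  shows integrable_difference_quotient_upper: "integrable lborel h"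
    and integral_difference_quotient_upper_eq_0: "integral\<^sup>L lborel h = 0"
proof -
  obtain D N :: "complex poly" where ND: "D \<noteq> 0" "degree N + 2 \<le> degree D" "\<forall>z. Im z \<ge> 0 \<longrightarrow> poly D z \<noteq> 0"
    and eq: "\<forall>y::real. y \<noteq> a \<longrightarrow> (poly Q y / poly P y - poly Q a / poly P a) / (of_real y - of_real a)
           + poly Q a / (poly P a * (of_real y + \<i>)) = poly N y / poly D y"
    by (rule difference_quotient_upper_eq_rational[OF nz deg, of a])
  have ae: "AE y in lborel. h y = poly N y / poly D y"
    using AE_lborel_singleton[of a] by eventually_elim (use eq in \<open>simp add: h_def\<close>)
  have hm: "h \<in> borel_measurable lborel"
    unfolding h_def by measurable
  show "integrable lborel h"
    using integrable_cong_AE[OF hm _ ae] integrable_rational_upper_halfplane[of D N] ND by simp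
  show "integral\<^sup>L lborel h = 0"
    using integral_cong_AE[OF hm _ ae] integral_rational_upper_halfplane_eq_0[of D N] ND by simp
qed

lemma
  fixes P Q :: "complex poly" and a :: real
  assumes nz: "\<And>z. Im z \<le> 0 \<Longrightarrow> poly P z \<noteq> 0" and deg: "degree Q < degree P"
  defines "h \<equiv> \<lambda>y::real. (poly Q y / poly P y - poly Q a / poly P a) / (of_real y - of_real a)
                 + poly Q a / (poly P a * (of_real y - \<i>))"
  shows integrable_difference_quotient_lower: "integrable lborel h"
    and integral_difference_quotient_lower_eq_0: "integral\<^sup>L lborel h = 0"
proof -
  \<comment> \<open>complex conjugation exchanges the two half-planes\<close>
  have nz': "poly (conj_poly P) z \<noteq> 0" if "Im z \<ge> 0" for z
    using nz[of "cnj z"] that by (simp add: poly_conj_poly)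
  have deg': "degree (conj_poly Q) < degree (conj_poly P)"
    using deg by simp
  define h' where "h' = (\<lambda>y::real. (poly (conj_poly Q) y / poly (conj_poly P) y
                   - poly (conj_poly Q) a / poly (conj_poly P) a) / (of_real y - of_real a)
                 + poly (conj_poly Q) a / (poly (conj_poly P) a * (of_real y + \<i>)))"
  have "h = (\<lambda>y. cnj (h' y))"
    by (simp add: h_def h'_def fun_eq_iff)
  moreover have "integrable lborel h'"
    unfolding h'_def by (rule integrable_difference_quotient_upper[OF nz' deg'])
  moreover have "integral\<^sup>L lborel h' = 0"
    unfolding h'_def by (rule integral_difference_quotient_upper_eq_0[OF nz' deg'])
  ultimately show "integrable lborel h" "integral\<^sup>L lborel h = 0"
    by (simp_all add: Bochner_Integration.integral_cnj)
qed

section \<open>Polynomials without zeros in the closed upper half-plane\<close>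

lemma norm_minus_cnj_less:
  fixes a w :: complex
  assumes "Im a < 0" and "Im w > 0"
  shows "norm (a - cnj w) < norm (a - w)"
proof -
  have "(Im a + Im w)\<^sup>2 < (Im a - Im w)\<^sup>2"
    using mult_neg_pos[OF assms] by (simp add: power2_eq_square algebra_simps)
  then have "(norm (a - cnj w))\<^sup>2 < (norm (a - w))\<^sup>2"
    by (simp add: cmod_power2)
  then show ?thesis
    by (simp add: power2_less_imp_less)
qed

lemma Im_inverse_neg:
  fixes x :: complex
  assumes "Im x > 0"
  shows "Im (inverse x) < 0"
  using assms by (simp add: Im_divide sum_power2_gt_zero_iff inverse_eq_divide divide_pos_pos)

lemma norm_poly_cnj_less:
  fixes p :: "complex poly"
  assumes "p \<noteq> 0" and "\<And>z. poly p z = 0 \<Longrightarrow> Im z < 0" and "Im w > 0"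
  shows "norm (poly p (cnj w)) \<le> norm (poly p w) \<and> (degree p > 0 \<longrightarrow> norm (poly p (cnj w)) < norm (poly p w))"
  using assms(1,2)
proof (induction p rule: poly_root_induct[where P = "\<lambda>a. Im a < 0"])
  case (no_roots p)
  then have "degree p = 0"
    using fundamental_theorem_of_algebra constant_degree by blast
  then obtain c where "p = [:c:]"
    by (rule degree_eq_zeroE)
  then show ?case
    by simp
next
  case (root a p)
  have "p \<noteq> 0" and "\<And>z. poly p z = 0 \<Longrightarrow> Im z < 0"
    using root.prems by auto
  then have IH: "norm (poly p (cnj w)) \<le> norm (poly p w)"
    using root.IH by blast
  have "poly p w \<noteq> 0"
    using root.prems(2)[of w] assms(3) by auto
  then have "norm (a - cnj w) * norm (poly p w) < norm (a - w) * norm (poly p w)"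
    using norm_minus_cnj_less[OF root.hyps assms(3)] by (intro mult_strict_right_mono) auto
  then have "norm (a - cnj w) * norm (poly p (cnj w)) < norm (a - w) * norm (poly p w)"
    using mult_left_mono[OF IH norm_ge_zero, of "a - cnj w"] by linarith
  moreover have "poly ([:a, -1:] * p) z = (a - z) * poly p z" for z
    by (simp add: algebra_simps)
  ultimately show ?case
    by (simp only: norm_mult less_imp_le simp_thms)
qed simp

lemma Im_logderiv_poly_neg:
  fixes p :: "complex poly"
  assumes "p \<noteq> 0" and "\<And>z. poly p z = 0 \<Longrightarrow> Im z < 0" and "Im x = 0"
  shows "Im (poly (pderiv p) x / poly p x) \<le> 0 \<and> (degree p > 0 \<longrightarrow> Im (poly (pderiv p) x / poly p x) < 0)"
  using assms(1,2)
proof (induction p rule: poly_root_induct[where P = "\<lambda>a. Im a < 0"])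
  case (no_roots p)
  then have "degree p = 0"
    using fundamental_theorem_of_algebra constant_degree by blast
  then obtain c where "p = [:c:]"
    by (rule degree_eq_zeroE)
  then show ?case
    by simp
next
  case (root a p)
  have px: "poly p x \<noteq> 0"
    using root.prems(2)[of x] assms(3) by auto
  have ax: "a - x \<noteq> 0"
    using root.hyps assms(3) by auto
  have "pderiv ([:a, -1:] * p) = [:a, -1:] * pderiv p + p * [:-1:]"
    by (simp only: pderiv_mult) (simp add: pderiv_pCons)
  then have "poly (pderiv ([:a, -1:] * p)) x = poly [:a, -1:] x * poly (pderiv p) x + poly p x * poly [:-1:] x"
    by (simp only: poly_add poly_mult)
  then have d: "poly (pderiv ([:a, -1:] * p)) x = (a - x) * poly (pderiv p) x - poly p x"
    by (simp add: algebra_simps del: mult_pCons_left)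
  have "poly ([:a, -1:] * p) x = (a - x) * poly p x"
    by (simp add: algebra_simps)
  then have "poly (pderiv ([:a, -1:] * p)) x / poly ([:a, -1:] * p) x
        = inverse (x - a) + poly (pderiv p) x / poly p x"
    unfolding d using px ax by (simp add: field_simps)
  moreover have "Im (inverse (x - a)) < 0"
    using root.hyps assms(3) by (intro Im_inverse_neg) simp
  moreover have "p \<noteq> 0" and "\<And>z. poly p z = 0 \<Longrightarrow> Im z < 0"
    using root.prems by auto
  then have "Im (poly (pderiv p) x / poly p x) \<le> 0"
    using root.IH by blast
  ultimately show ?case
    by simp
qed simp

lemma card_roots_rsquarefree:
  fixes q :: "complex poly"
  assumes "rsquarefree q"
  shows "card {z. poly q z = 0} = degree q"
proof -
  have "q \<noteq> 0"
    using assms by (simp add: rsquarefree_def)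
  then have "degree q = degree (\<Prod>z | poly q z = 0. [:-z, 1:])"
    using arg_cong[OF complex_poly_decompose_rsquarefree[OF assms], of degree] by simp
  also have "\<dots> = card {z. poly q z = 0}"
    by (subst degree_prod_sum_eq) auto
  finally show ?thesis
    by simp
qed

section \<open>The polynomial A + tB\<close>

definition polyF :: "complex poly \<Rightarrow> real \<Rightarrow> complex poly" where
  "polyF p t = polyA p + smult (of_real t) (polyB p)"

lemma polyF_eq:
  "polyF p t = smult ((1 - \<i> * of_real t) / 2) p + smult ((1 + \<i> * of_real t) / 2) (conj_poly p)"
  by (rule poly_eqI) (simp add: polyF_def polyA_def polyB_def coeff_conj_poly field_simps)

lemma coeff_polyF: "coeff (polyF p t) n = (1 - \<i> * of_real t) / 2 * coeff p n + (1 + \<i> * of_real t) / 2 * cnj (coeff p n)"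
  by (simp add: polyF_eq coeff_conj_poly)

lemma degree_polyF_le: "degree (polyF p t) \<le> degree p"
  by (rule degree_le) (simp add: coeff_polyF coeff_eq_0)

lemma
  assumes "lead_coeff p = 1"
  shows degree_polyF: "degree (polyF p t) = degree p"
    and lead_coeff_polyF: "lead_coeff (polyF p t) = 1"
proof -
  have "coeff (polyF p t) (degree p) = 1"
    using assms by (simp add: coeff_polyF field_simps)
  moreover note degree_polyF_le[of p t]
  moreover have "degree p \<le> degree (polyF p t)"
    using \<open>coeff (polyF p t) (degree p) = 1\<close> by (intro le_degree) simp
  ultimately show "degree (polyF p t) = degree p"
    by simp
  with \<open>coeff (polyF p t) (degree p) = 1\<close> show "lead_coeff (polyF p t) = 1"
    by simp
qed

lemma poly_polyF: "poly (polyF p t) z = (1 - \<i> * of_real t) / 2 * poly p z + (1 + \<i> * of_real t) / 2 * cnj (poly p (cnj z))"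
  by (simp add: polyF_eq poly_conj_poly)

lemma polyF_root_real:
  fixes p :: "complex poly"
  assumes nz: "\<And>z. Im z \<ge> 0 \<Longrightarrow> poly p z \<noteq> 0" and "degree p > 0"
    and root: "poly (polyF p t) z = 0"
  shows "Im z = 0"
proof (rule ccontr)
  assume "Im z \<noteq> 0"
  have p0: "p \<noteq> 0"
    using nz[of 0] by auto
  have roots: "Im w < 0" if "poly p w = 0" for w
    using nz[of w] that by force
  have "norm ((1 - \<i> * of_real t) / 2 * poly p z) = norm ((1 + \<i> * of_real t) / 2 * cnj (poly p (cnj z)))"
    using root by (simp add: poly_polyF add_eq_0_iff2 del: complex_cnj_mult)
  moreover have "norm (1 - \<i> * complex_of_real t) = norm (1 + \<i> * complex_of_real t)"
    by (simp add: cmod_def)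
  moreover have "1 + \<i> * complex_of_real t \<noteq> 0"
    by (simp add: complex_eq_iff)
  ultimately have eq: "norm (poly p z) = norm (poly p (cnj z))"
    by (simp add: norm_mult norm_divide)
  show False
  proof (cases "Im z > 0")
    case True
    then show False
      using norm_poly_cnj_less[OF p0 roots True] eq \<open>degree p > 0\<close> by simp
  next
    case False
    then have "Im (cnj z) > 0"
      using \<open>Im z \<noteq> 0\<close> by simp
    then show False
      using norm_poly_cnj_less[OF p0 roots] eq \<open>degree p > 0\<close> by fastforce
  qed
qed

lemma polyF_root_simple:
  fixes p :: "complex poly"
  assumes nz: "\<And>z. Im z \<ge> 0 \<Longrightarrow> poly p z \<noteq> 0" and "degree p > 0"
    and root: "poly (polyF p t) z = 0"
  shows "poly (pderiv (polyF p t)) z \<noteq> 0"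
proof
  assume root': "poly (pderiv (polyF p t)) z = 0"
  define u where "u = (1 - \<i> * of_real t) / (2::complex)"
  define v where "v = (1 + \<i> * of_real t) / (2::complex)"
  have "Im z = 0"
    by (rule polyF_root_real[OF nz \<open>degree p > 0\<close> root])
  then have z: "cnj z = z"
    by (simp add: complex_eq_iff)
  have pz: "poly p z \<noteq> 0"
    using nz \<open>Im z = 0\<close> by simp
  have u: "u \<noteq> 0" and v: "v \<noteq> 0"
    by (simp_all add: u_def v_def complex_eq_iff)
  have "v * cnj (poly p z) = - (u * poly p z)"
    using root z by (simp add: poly_polyF u_def v_def eq_neg_iff_add_eq_0 add.commute)
  moreover have "v * cnj (poly (pderiv p) z) = - (u * poly (pderiv p) z)"
    using root' z
    by (simp add: polyF_eq pderiv_add pderiv_smult pderiv_conj_poly poly_conj_poly u_def v_def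
          eq_neg_iff_add_eq_0 add.commute)
  \<comment> \<open>so the logarithmic derivative of \<open>p\<close> at the real point \<open>z\<close> would be real\<close>
  ultimately have cnj_p: "cnj (poly p z) = - u * poly p z / v"
      and cnj_dp: "cnj (poly (pderiv p) z) = - u * poly (pderiv p) z / v"
    using v by (simp_all add: field_simps)
  have "cnj (poly (pderiv p) z / poly p z) = (- u * poly (pderiv p) z / v) / (- u * poly p z / v)"
    by (simp only: complex_cnj_divide cnj_p cnj_dp)
  also have "\<dots> = poly (pderiv p) z / poly p z"
    using u v by simp
  finally have "cnj (poly (pderiv p) z / poly p z) = poly (pderiv p) z / poly p z" .
  then have "Im (cnj (poly (pderiv p) z / poly p z)) = Im (poly (pderiv p) z / poly p z)"
    by (rule arg_cong)
  then have "Im (poly (pderiv p) z / poly p z) = 0"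
    using cnj.sel(2)[of "poly (pderiv p) z / poly p z"] by linarith
  moreover have "p \<noteq> 0"
    using nz[of 0] by auto
  moreover have "Im w < 0" if "poly p w = 0" for w
    using nz[of w] that by force
  ultimately show False
    using Im_logderiv_poly_neg[of p z] \<open>Im z = 0\<close> \<open>degree p > 0\<close> by simp
qed

lemma
  fixes p :: "complex poly"
  assumes monic: "lead_coeff p = 1" and nz: "\<And>z. Im z \<ge> 0 \<Longrightarrow> poly p z \<noteq> 0" and "degree p > 0"
  shows finite_real_roots_At: "finite (real_roots_At p t)"
    and card_real_roots_At: "card (real_roots_At p t) = degree p"
proof -
  have roots: "of_real ` real_roots_At p t = {z. poly (polyF p t) z = 0}"
  proof (intro equalityI subsetI)
    fix z assume "z \<in> {z. poly (polyF p t) z = 0}"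
    then have root: "poly (polyF p t) z = 0"
      by simp
    have "Im z = 0"
      using nz \<open>degree p > 0\<close> root by (rule polyF_root_real)
    then have z: "z = of_real (Re z)"
      by (simp add: complex_eq_iff)
    have "poly (polyF p t) (of_real (Re z)) = 0"
      using root by (subst (asm) z)
    then have "Re z \<in> real_roots_At p t"
      by (simp add: real_roots_At_def polyF_def)
    with z show "z \<in> of_real ` real_roots_At p t"
      by (rule image_eqI)
  next
    fix z :: complex
    assume "z \<in> of_real ` real_roots_At p t"
    then show "z \<in> {z. poly (polyF p t) z = 0}"
      unfolding real_roots_At_def polyF_def[symmetric] by auto
  qed
  have "polyF p t \<noteq> 0"
    using lead_coeff_polyF[OF monic, of t] by auto
  then have "finite {z. poly (polyF p t) z = 0}"
    by (rule poly_roots_finite)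
  moreover have inj: "inj_on complex_of_real (real_roots_At p t)"
    by (simp add: inj_on_def)
  ultimately show "finite (real_roots_At p t)"
    unfolding roots[symmetric] by (rule finite_imageD)
  have "rsquarefree (polyF p t)"
    unfolding rsquarefree_roots using polyF_root_simple[OF nz \<open>degree p > 0\<close>] by blast
  then have "card {z. poly (polyF p t) z = 0} = degree p"
    unfolding degree_polyF[OF monic, of t, symmetric] by (rule card_roots_rsquarefree)
  then show "card (real_roots_At p t) = degree p"
    unfolding roots[symmetric] card_image[OF inj] .
qed

section \<open>Interpolation at the roots of A + tB\<close>

lemma lagrange_interpolation_simple_roots:
  fixes F Q :: "'a::field poly" and x :: "'b \<Rightarrow> 'a"
  assumes fin: "finite A" and inj: "inj_on x A"
    and root: "\<And>a. a \<in> A \<Longrightarrow> poly F (x a) = 0"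
    and simple: "\<And>a. a \<in> A \<Longrightarrow> poly (pderiv F) (x a) \<noteq> 0"
    and degF: "degree F \<le> card A" and degQ: "degree Q < card A"
  shows "Q = (\<Sum>a\<in>A. smult (poly Q (x a) / poly (pderiv F) (x a)) (synthetic_div F (x a)))"
    (is "Q = ?L")
proof (rule ccontr)
  assume "Q \<noteq> ?L"
  then have G: "Q - ?L \<noteq> 0"
    by simp
  have "degree (smult c (synthetic_div F (x a))) \<le> card A - 1" for c a
    using degF degree_smult_le[of c "synthetic_div F (x a)"] by (simp add: degree_synthetic_div)
  then have "degree ?L \<le> card A - 1"
    by (intro degree_sum_le[OF fin])
  then have "degree (Q - ?L) < card A"
    using degQ degree_diff_le_max[of Q ?L] by linarith
  moreover have "poly ?L (x b) = poly Q (x b)" if b: "b \<in> A" for b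
  proof -
    have "poly (synthetic_div F (x a)) (x b) = 0" if "a \<in> A" "a \<noteq> b" for a
    proof -
      have "x b - x a \<noteq> 0"
        using inj_onD[OF inj _ b that(1)] that(2) by auto
      then show ?thesis
        using poly_synthetic_div_mult[OF root[OF that(1)], of "x b"] root[OF b] by simp
    qed
    then have "poly ?L (x b) = poly Q (x b) / poly (pderiv F) (x b) * poly (synthetic_div F (x b)) (x b)"
      by (simp add: poly_sum sum.remove[OF fin b])
    then show ?thesis
      using simple[OF b] by (simp add: poly_synthetic_div_root[OF root[OF b]])
  qed
  then have "x ` A \<subseteq> {z. poly (Q - ?L) z = 0}"
    by auto
  then have "card (x ` A) \<le> card {z. poly (Q - ?L) z = 0}"
    by (rule card_mono[OF poly_roots_finite[OF G]])
  then have "card A \<le> card {z. poly (Q - ?L) z = 0}"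
    by (simp add: card_image[OF inj])
  then have "card A \<le> degree (Q - ?L)"
    using card_poly_roots_bound[OF G] by linarith
  ultimately show False
    by simp
qed

lemma AE_interpolation_real_roots:
  fixes p Q :: "complex poly"
  assumes monic: "lead_coeff p = 1" and nz: "\<And>z. Im z \<ge> 0 \<Longrightarrow> poly p z \<noteq> 0"
    and "degree p > 0" and degQ: "degree Q < degree p"
  shows "AE y in lborel. poly Q y / poly p y
           = (\<Sum>a\<in>real_roots_At p t. poly Q a / poly (pderiv (polyF p t)) a
                 * (poly (polyF p t) y / ((of_real y - of_real a) * poly p y)))"
proof -
  define R where "R = real_roots_At p t"
  define F where "F = polyF p t"
  have fin: "finite R" and card: "card R = degree p"
    unfolding R_def using finite_real_roots_At card_real_roots_At assms by blast+
  have root: "poly F (of_real a) = 0" if "a \<in> R" for a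
    using that by (simp add: R_def F_def real_roots_At_def polyF_def)
  have "Q = (\<Sum>a\<in>R. smult (poly Q a / poly (pderiv F) a) (synthetic_div F a))"
    using fin root polyF_root_simple[OF nz \<open>degree p > 0\<close>] card degQ degree_polyF_le
    by (intro lagrange_interpolation_simple_roots) (auto simp: inj_on_def F_def)
  then have Qy: "poly Q y = (\<Sum>a\<in>R. poly Q a / poly (pderiv F) a * poly (synthetic_div F a) y)" for y
    by (metis (no_types, lifting) poly_smult poly_sum sum.cong)
  have "poly (synthetic_div F a) y = poly F y / (of_real y - of_real a)"
    if "a \<in> R" "y \<notin> R" for a y
    using poly_synthetic_div_mult[OF root[OF that(1)], of y] that by (auto simp: eq_divide_eq)
  then have pointwise: "poly Q y / poly p y = (\<Sum>a\<in>R. poly Q a / poly (pderiv F) a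
                 * (poly F y / ((of_real y - of_real a) * poly p y)))" if "y \<notin> R" for y
    unfolding Qy[of y] sum_divide_distrib using that by (intro sum.cong) auto
  have "AE y in lborel. y \<notin> R"
    using fin by (intro AE_not_in countable_imp_null_set_lborel countable_finite)
  then show ?thesis
    unfolding R_def[symmetric] F_def[symmetric] by eventually_elim (rule pointwise)
qed

lemma integrable_norm_quotient_at_root_powr:
  fixes F P :: "complex poly" and a :: real
  assumes nz: "\<And>x::real. poly P x \<noteq> 0" and root: "poly F a = 0"
    and deg: "degree F \<le> degree P" "degree P > 0" and s: "s > 1"
  shows "integrable lborel (\<lambda>y::real. norm (poly F y / ((of_real y - of_real a) * poly P y)) powr s)"
proof -
  define S where "S = synthetic_div F a"
  have "degree S < degree P"
    using deg by (simp add: S_def degree_synthetic_div)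
  then have int: "integrable lborel (\<lambda>y::real. norm (poly S y / poly P y) powr s)"
    by (rule integrable_norm_rational_powr[OF nz _ s])
  have "AE y in lborel. norm (poly S y / poly P y) powr s
      = norm (poly F y / ((of_real y - of_real a) * poly P y)) powr s"
    using AE_lborel_singleton[of a]
  proof eventually_elim
    case (elim y)
    then have "poly S y = poly F y / (of_real y - of_real a)"
      using poly_synthetic_div_mult[OF root, of y] by (simp add: S_def eq_divide_eq)
    then show ?case
      by (simp add: divide_divide_eq_left mult.commute)
  qed
  then show ?thesis
    using int by (rule integrable_cong_AE_imp[rotated 2]) measurable
qed

text \<open>
  Used with \<open>E = y - a\<close>, \<open>G = y + i\<close>, \<open>H = y - i\<close>, \<open>P = p(y)\<close>, \<open>Pb = cnj (p(y))\<close>,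
  \<open>pa = p(a)\<close>, \<open>pba = cnj (p(a))\<close>, where the first hypothesis says \<open>F(a) = 0\<close>: it splits the
  integrand into the two corrected difference quotients plus a multiple of \<open>1/(1 + y\<^sup>2)\<close>.
\<close>
lemma partial_fractions_at_node:
  fixes u v q qa P Pb pa pba E G H :: complex
  assumes "u * pa + v * pba = 0" and "P \<noteq> 0" "Pb \<noteq> 0" "pa \<noteq> 0" "pba \<noteq> 0"
    and "E \<noteq> 0" "G \<noteq> 0" "H \<noteq> 0"
  shows "q * (u * P + v * Pb) / (E * P * Pb)
       = v * ((q / P - qa / pa) / E + qa / (pa * G))
       + u * ((q / Pb - qa / pba) / E + qa / (pba * H))
       + (G - H) * v * qa / pa / (G * H)"
proof -
  have u: "u = - v * pba / pa"
    using assms by (simp add: field_simps eq_neg_iff_add_eq_0)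
  show ?thesis
    unfolding u using assms(2-) by (simp add: field_simps)
qed

lemma integral_node_integrand:
  fixes p Q :: "complex poly" and t a :: real
  assumes nz: "\<And>z. Im z \<ge> 0 \<Longrightarrow> poly p z \<noteq> 0" and deg: "degree Q < degree p"
    and root: "poly (polyF p t) a = 0"
  defines "\<Phi> \<equiv> \<lambda>y::real. poly Q y * poly (polyF p t) y
                   / ((of_real y - of_real a) * poly p y * poly (conj_poly p) y)"
  shows "integral\<^sup>L lborel \<Phi> = 2 * \<i> * pi * ((1 + \<i> * t) / 2) * poly Q a / poly p a"
proof -
  define u where "u = (1 - \<i> * of_real t) / (2::complex)"
  define v where "v = (1 + \<i> * of_real t) / (2::complex)"
  define pa where "pa = poly p a"
  define qa where "qa = poly Q a"
  have pa: "pa \<noteq> 0" "cnj pa \<noteq> 0"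
    using nz by (simp_all add: pa_def)
  have hr: "u * pa + v * cnj pa = 0"
    using root by (simp add: polyF_eq u_def v_def pa_def)
  have nz': "poly (conj_poly p) z \<noteq> 0" if "Im z \<le> 0" for z
    using nz[of "cnj z"] that by (simp add: poly_conj_poly)
  define hU where "hU = (\<lambda>y::real. (poly Q y / poly p y - qa / pa) / (of_real y - of_real a)
                 + qa / (pa * (of_real y + \<i>)))"
  define hL where "hL = (\<lambda>y::real. (poly Q y / cnj (poly p y) - qa / cnj pa) / (of_real y - of_real a)
                 + qa / (cnj pa * (of_real y - \<i>)))"
  define I where "I = (\<lambda>y::real. complex_of_real (inverse (1 + y\<^sup>2)))"
  define C where "C = 2 * \<i> * v * qa / pa"
  have "integrable lborel hU" "integral\<^sup>L lborel hU = 0"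
    using integrable_difference_quotient_upper[OF nz deg, of a]
          integral_difference_quotient_upper_eq_0[OF nz deg, of a]
    by (simp_all add: hU_def qa_def pa_def)
  moreover have "integrable lborel hL" "integral\<^sup>L lborel hL = 0"
    using integrable_difference_quotient_lower[OF nz', of Q a]
          integral_difference_quotient_lower_eq_0[OF nz', of Q a] deg
    by (simp_all add: hL_def qa_def pa_def)
  moreover have "integrable lborel I" "integral\<^sup>L lborel I = pi"
    unfolding I_def using integrable_inverse_one_plus_square integral_inverse_one_plus_square
    by (simp_all only: integrable_of_real integral_complex_of_real)
  ultimately have R: "integrable lborel (\<lambda>y. v * hU y + u * hL y + C * I y)"
      "integral\<^sup>L lborel (\<lambda>y. v * hU y + u * hL y + C * I y) = C * pi"
    by simp_all
  have "\<Phi> y = v * hU y + u * hL y + C * I y" if "y \<noteq> a" for y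
  proof -
    define w where "w = complex_of_real y"
    have ne: "poly p w \<noteq> 0" "cnj (poly p w) \<noteq> 0" "w - of_real a \<noteq> 0" "w + \<i> \<noteq> 0" "w - \<i> \<noteq> 0"
      using nz[of w] that by (auto simp: w_def complex_eq_iff)
    have "\<Phi> y = poly Q w * (u * poly p w + v * cnj (poly p w)) / ((w - of_real a) * poly p w * cnj (poly p w))"
      by (simp add: \<Phi>_def polyF_eq u_def v_def w_def)
    also have "\<dots> = v * ((poly Q w / poly p w - qa / pa) / (w - of_real a) + qa / (pa * (w + \<i>)))
       + u * ((poly Q w / cnj (poly p w) - qa / cnj pa) / (w - of_real a) + qa / (cnj pa * (w - \<i>)))
       + ((w + \<i>) - (w - \<i>)) * v * qa / pa / ((w + \<i>) * (w - \<i>))"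
      by (rule partial_fractions_at_node[OF hr ne(1,2) pa ne(3-5)])
    also have "((w + \<i>) - (w - \<i>)) * v * qa / pa / ((w + \<i>) * (w - \<i>)) = C * I y"
      by (simp add: C_def I_def w_def power2_eq_square algebra_simps divide_inverse)
    finally show ?thesis
      by (simp add: hU_def hL_def w_def)
  qed
  then have ae: "AE y in lborel. \<Phi> y = v * hU y + u * hL y + C * I y"
    using AE_lborel_singleton[of a] by (auto elim: AE_mp)
  have "\<Phi> \<in> borel_measurable lborel"
    unfolding \<Phi>_def by measurable
  then show ?thesis
    using integral_cong_AE[OF _ _ ae] R by (auto simp: C_def v_def qa_def pa_def)
qed

lemma integral_representation_at_root:
  fixes p Q :: "complex poly" and t a :: real
  assumes nz: "\<And>z. Im z \<ge> 0 \<Longrightarrow> poly p z \<noteq> 0" and deg: "degree Q < degree p"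
    and root: "poly (polyF p t) a = 0"
  shows "pi * poly Q a = poly (polyB p) a * integral\<^sup>L lborel (\<lambda>y::real. poly Q y * poly (polyF p t) y
                   / ((of_real y - of_real a) * poly p y * poly (conj_poly p) y))"
proof -
  define pa where "pa = poly p a"
  define v where "v = (1 + \<i> * of_real t) / (2::complex)"
  have pa: "pa \<noteq> 0"
    using nz by (simp add: pa_def)
  have "(1 - \<i> * of_real t) / 2 * pa + v * cnj pa = 0"
    using root by (simp add: polyF_eq v_def pa_def)
  moreover have "v * (pa - cnj pa) = pa - ((1 - \<i> * of_real t) / 2 * pa + v * cnj pa)"
    by (simp add: v_def field_simps)
  ultimately have v: "v * (pa - cnj pa) = pa"
    by simp
  have B: "poly (polyB p) a = (pa - cnj pa) / (2 * \<i>)"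
    by (simp add: polyB_def pa_def)
  have "integral\<^sup>L lborel (\<lambda>y::real. poly Q y * poly (polyF p t) y
                   / ((of_real y - of_real a) * poly p y * poly (conj_poly p) y))
      = 2 * \<i> * pi * v * poly Q a / pa"
    using integral_node_integrand[OF nz deg root] by (simp add: v_def pa_def)
  then have "poly (polyB p) a * integral\<^sup>L lborel (\<lambda>y::real. poly Q y * poly (polyF p t) y
                   / ((of_real y - of_real a) * poly p y * poly (conj_poly p) y))
      = (pa - cnj pa) / (2 * \<i>) * (2 * \<i> * pi * v * poly Q a / pa)"
    by (simp only: B)
  also have "\<dots> = v * (pa - cnj pa) * pi * poly Q a / pa"
    using pa by (simp add: field_simps)
  also have "\<dots> = pi * poly Q a"
    using v pa by simp
  finally show ?thesis ..
qed

lemma Lp_norm_pi_nonneg: "Lp_norm_pi r f \<ge> 0"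
  by (simp add: Lp_norm_pi_def)

lemma Lp_norm_pi_powr:
  assumes "r > 0"
  shows "Lp_norm_pi r f powr r = integral\<^sup>L lborel (\<lambda>y. norm (f y) powr r / pi)"
proof -
  have "integral\<^sup>L lborel (\<lambda>y. norm (f y) powr r / pi) \<ge> 0"
    by (rule integral_nonneg_AE) simp
  then show ?thesis
    using assms by (simp add: Lp_norm_pi_def powr_powr)
qed

lemma integral_powr_root_eq_Lp_norm_pi:
  assumes "r > 0"
  shows "(integral\<^sup>L lborel (\<lambda>y. norm (f y) powr r)) powr (1/r) = pi powr (1/r) * Lp_norm_pi r f"
proof -
  have "integral\<^sup>L lborel (\<lambda>y. norm (f y) powr r) \<ge> 0"
    by (rule integral_nonneg_AE) simp
  then show ?thesis
    by (simp add: Lp_norm_pi_def powr_divide)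
qed

lemma conjugate_exponent_gt_1:
  fixes r r' :: real
  assumes "r > 1" and "1 / r + 1 / r' = 1"
  shows "r' > 1"
proof -
  have "1 / r' = 1 - 1 / r"
    using assms(2) by simp
  moreover have "0 < 1 - 1 / r" "1 - 1 / r < 1"
    using assms(1) by auto
  ultimately have "0 < 1 / r'" "1 / r' < 1"
    by auto
  then show ?thesis
    by (simp add: field_simps split: if_splits)
qed

lemma integral_norm_mult_le_Lp_norm_pi:
  fixes f g :: "real \<Rightarrow> complex"
  assumes r: "r > 1" and conj: "1 / r + 1 / r' = 1"
    and "f \<in> borel_measurable lborel" "g \<in> borel_measurable lborel"
    and "integrable lborel (\<lambda>y. norm (f y) powr r)" "integrable lborel (\<lambda>y. norm (g y) powr r')"
  shows "integral\<^sup>L lborel (\<lambda>y. norm (f y) * norm (g y)) \<le> pi * Lp_norm_pi r f * Lp_norm_pi r' g"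
proof -
  have r': "r' > 1"
    by (rule conjugate_exponent_gt_1[OF r conj])
  have "integral\<^sup>L lborel (\<lambda>y. norm (f y) * norm (g y)) \<le>
      (integral\<^sup>L lborel (\<lambda>y. norm (f y) powr r)) powr (1/r) * (integral\<^sup>L lborel (\<lambda>y. norm (g y) powr r')) powr (1/r')"
    using assms r' by (intro integral_Holder) auto
  also have "\<dots> = (pi powr (1/r) * pi powr (1/r')) * (Lp_norm_pi r f * Lp_norm_pi r' g)"
    using r r' by (simp add: integral_powr_root_eq_Lp_norm_pi)
  also have "pi powr (1/r) * pi powr (1/r') = pi"
    using conj by (simp add: powr_add[symmetric])
  finally show ?thesis
    by (simp add: mult.assoc)
qed

lemma Lp_norm_pi_sum_le:
  fixes c :: "'a \<Rightarrow> complex" and g :: "'a \<Rightarrow> real \<Rightarrow> complex"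
  assumes fin: "finite A" and card: "card A \<le> n" and r: "r \<ge> 1"
    and gi: "\<And>a. a \<in> A \<Longrightarrow> integrable lborel (\<lambda>y. norm (g a y) powr r)"
    and f: "AE y in lborel. f y = (\<Sum>a\<in>A. c a * g a y)"
  shows "Lp_norm_pi r f \<le> real n powr (1 - 1/r) * (\<Sum>a\<in>A. norm (c a) powr r * Lp_norm_pi r (g a) powr r) powr (1/r)"
proof -
  define \<Sigma> where "\<Sigma> = (\<Sum>a\<in>A. norm (c a) powr r * Lp_norm_pi r (g a) powr r)"
  have "AE y in lborel. norm (f y) powr r / pi
      \<le> (\<Sum>a\<in>A. real n powr (r - 1) * norm (c a) powr r * (norm (g a y) powr r / pi))"
    using f
  proof eventually_elim
    case (elim y)
    have "norm (f y) powr r \<le> real n powr (r - 1) * (\<Sum>a\<in>A. norm (c a * g a y) powr r)"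
      unfolding elim by (rule norm_sum_powr_le[OF fin r card])
    then have "norm (f y) powr r / pi \<le> real n powr (r - 1) * (\<Sum>a\<in>A. norm (c a * g a y) powr r) / pi"
      by (rule divide_right_mono) simp
    also have "\<dots> = (\<Sum>a\<in>A. real n powr (r - 1) * norm (c a) powr r * (norm (g a y) powr r / pi))"
      by (simp add: norm_mult powr_mult sum_distrib_left sum_divide_distrib mult.assoc)
    finally show ?case .
  qed
  then have "integral\<^sup>L lborel (\<lambda>y. norm (f y) powr r / pi)
      \<le> integral\<^sup>L lborel (\<lambda>y. \<Sum>a\<in>A. real n powr (r - 1) * norm (c a) powr r * (norm (g a y) powr r / pi))"
    using gi by (intro integral_mono_AE') (auto intro!: sum_nonneg)
  also have "\<dots> = real n powr (r - 1) * \<Sigma>"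
    using gi r by (simp add: integral_sum \<Sigma>_def Lp_norm_pi_powr sum_distrib_left mult.assoc)
  finally have "Lp_norm_pi r f \<le> (real n powr (r - 1) * \<Sigma>) powr (1/r)"
    unfolding Lp_norm_pi_def using r by (intro powr_mono2) (auto intro!: integral_nonneg_AE)
  also have "\<dots> = real n powr (1 - 1/r) * \<Sigma> powr (1/r)"
    using r by (simp add: \<Sigma>_def powr_mult powr_powr sum_nonneg diff_divide_distrib)
  finally show ?thesis
    unfolding \<Sigma>_def .
qed

lemma norm_poly_at_root_le:
  fixes p Q :: "complex poly" and t a r r' :: real
  assumes nz: "\<And>z. Im z \<ge> 0 \<Longrightarrow> poly p z \<noteq> 0" and degQ: "degree Q < degree p"
    and root: "poly (polyF p t) a = 0" and r: "r > 1" and conj: "1 / r + 1 / r' = 1"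
  shows "norm (poly Q a) \<le> norm (poly (polyB p) a) * Lp_norm_pi r (\<lambda>y. poly Q y / poly p y)
           * Lp_norm_pi r' (\<lambda>y. poly (polyF p t) y / ((of_real y - of_real a) * poly p y))"
proof -
  define f where "f = (\<lambda>y::real. poly Q y / poly p y)"
  define g where "g = (\<lambda>y::real. poly (polyF p t) y / ((of_real y - of_real a) * poly p y))"
  define \<Phi> where "\<Phi> = (\<lambda>y::real. poly Q y * poly (polyF p t) y
                   / ((of_real y - of_real a) * poly p y * poly (conj_poly p) y))"
  note repr = integral_representation_at_root[OF nz degQ root, folded \<Phi>_def]
  have nz': "poly p (of_real x) \<noteq> 0" for x :: real
    using nz by simp
  have "degree p > 0"
    using degQ by simp
  have f: "integrable lborel (\<lambda>y. norm (f y) powr r)"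
    unfolding f_def using integrable_norm_rational_powr[OF nz' degQ r] .
  have g: "integrable lborel (\<lambda>y. norm (g y) powr r')"
    unfolding g_def using conjugate_exponent_gt_1[OF r conj] degree_polyF_le \<open>degree p > 0\<close>
    by (intro integrable_norm_quotient_at_root_powr[OF nz' root]) auto
  have norm_\<Phi>: "norm (\<Phi> y) = norm (f y) * norm (g y)" for y
    by (simp add: \<Phi>_def f_def g_def norm_mult norm_divide)
  have "pi * norm (poly Q a) = norm (poly (polyB p) a) * norm (integral\<^sup>L lborel \<Phi>)"
    using arg_cong[OF repr, of norm] by (simp add: norm_mult)
  also have "\<dots> \<le> norm (poly (polyB p) a) * integral\<^sup>L lborel (\<lambda>y. norm (f y) * norm (g y))"
    unfolding norm_\<Phi>[symmetric] by (intro mult_left_mono integral_norm_bound) simp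
  also have "\<dots> \<le> norm (poly (polyB p) a) * (pi * Lp_norm_pi r f * Lp_norm_pi r' g)"
    using f g by (intro mult_left_mono integral_norm_mult_le_Lp_norm_pi[OF r conj]) (auto simp: f_def g_def)
  finally show ?thesis
    unfolding f_def g_def by (simp add: mult_ac)
qed

lemma Lp_norm_pi_le_interpolation:
  fixes p Q :: "complex poly" and t r r' :: real
  assumes monic: "lead_coeff p = 1" and nz: "\<And>z. Im z \<ge> 0 \<Longrightarrow> poly p z \<noteq> 0"
    and degQ: "degree Q < degree p" and r: "r > 1" and conj: "1 / r + 1 / r' = 1"
  shows "Lp_norm_pi r (\<lambda>y. poly Q y / poly p y)
           \<le> real (degree p) powr (1 / r') *
             (\<Sum>a\<in>real_roots_At p t. norm (poly Q a / poly (pderiv (polyF p t)) a) powr r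
                * Lp_norm_pi r (\<lambda>y. poly (polyF p t) y / ((of_real y - of_real a) * poly p y)) powr r) powr (1 / r)"
proof -
  have "degree p > 0"
    using degQ by simp
  have "1 / r' = 1 - 1 / r"
    using conj by simp
  show ?thesis
    unfolding \<open>1 / r' = 1 - 1 / r\<close>
  proof (rule Lp_norm_pi_sum_le)
    show "finite (real_roots_At p t)" "card (real_roots_At p t) \<le> degree p"
      using finite_real_roots_At card_real_roots_At monic nz \<open>degree p > 0\<close> by auto
    show "integrable lborel (\<lambda>y. norm (poly (polyF p t) y / ((of_real y - of_real a) * poly p y)) powr r)"
      if "a \<in> real_roots_At p t" for a
      using that nz \<open>degree p > 0\<close> degree_polyF_le r
      by (intro integrable_norm_quotient_at_root_powr) (auto simp: real_roots_At_def polyF_def)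
  qed (use r AE_interpolation_real_roots[OF monic nz \<open>degree p > 0\<close> degQ] in auto)
qed

lemma sum_nodes_le_Lp_norm_pi:
  fixes p Q :: "complex poly" and t r r' :: real and I :: "real \<Rightarrow> real \<Rightarrow> real"
  assumes nz: "\<And>z. Im z \<ge> 0 \<Longrightarrow> poly p z \<noteq> 0"
    and degQ: "degree Q < degree p" and r: "r > 1" and conj: "1 / r + 1 / r' = 1"
  defines "I \<equiv> \<lambda>a s. Lp_norm_pi s (\<lambda>y. poly (polyF p t) y / ((of_real y - of_real a) * poly p y))"
  shows "(\<Sum>a\<in>real_roots_At p t. norm (poly Q a) powr r / norm (poly (pderiv (polyF p t)) a) powr r
            * I a r powr r) powr (1 / r)
         \<le> Lp_norm_pi r (\<lambda>y. poly Q y / poly p y) *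
           (\<Sum>a\<in>real_roots_At p t. norm (poly (polyB p) a) powr r / norm (poly (pderiv (polyF p t)) a) powr r
            * I a r powr r * I a r' powr r) powr (1 / r)"
proof -
  define w where "w = (\<lambda>a. I a r powr r / norm (poly (pderiv (polyF p t)) a) powr r)"
  have "(\<Sum>a\<in>real_roots_At p t. norm (poly Q a) powr r * w a) powr (1 / r)
      \<le> Lp_norm_pi r (\<lambda>y. poly Q y / poly p y) *
        (\<Sum>a\<in>real_roots_At p t. (norm (poly (polyB p) a) * I a r') powr r * w a) powr (1 / r)"
  proof (rule sum_powr_root_le)
    show "0 \<le> norm (poly Q a) \<and> norm (poly Q a)
            \<le> Lp_norm_pi r (\<lambda>y. poly Q y / poly p y) * (norm (poly (polyB p) a) * I a r')"
      if "a \<in> real_roots_At p t" for a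
      using that norm_poly_at_root_le[OF nz degQ _ r conj, of t a]
      by (simp add: I_def real_roots_At_def polyF_def mult_ac)
  qed (use r in \<open>auto simp: w_def I_def Lp_norm_pi_nonneg\<close>)
  moreover have "(\<Sum>a\<in>real_roots_At p t. norm (poly Q a) powr r / norm (poly (pderiv (polyF p t)) a) powr r
            * I a r powr r) = (\<Sum>a\<in>real_roots_At p t. norm (poly Q a) powr r * w a)"
    by (simp add: w_def)
  moreover have "(\<Sum>a\<in>real_roots_At p t. norm (poly (polyB p) a) powr r / norm (poly (pderiv (polyF p t)) a) powr r
            * I a r powr r * I a r' powr r)
      = (\<Sum>a\<in>real_roots_At p t. (norm (poly (polyB p) a) * I a r') powr r * w a)"
    by (intro sum.cong) (simp_all add: w_def powr_mult I_def Lp_norm_pi_nonneg)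
  ultimately show ?thesis
    by simp
qed

theorem proposition4p4:
  fixes p Q :: "complex poly" and M :: nat and t r r' :: real
  assumes monic: "lead_coeff p = 1"
    and degp: "degree p = M" and M1: "M \<ge> 1"
    and nozero: "\<forall>z. Im z \<ge> 0 \<longrightarrow> poly p z \<noteq> 0"
    and r1: "1 < r" and conj: "1 / r + 1 / r' = 1"
    and degQ: "degree Q < M"
  shows "Lp_norm_pi r (\<lambda>y. poly Q (of_real y) / poly p (of_real y))
           \<le> real M powr (1 / r') *
             (\<Sum>a\<in>real_roots_At p t.
                 norm (poly Q (of_real a) /
                   (poly (pderiv (polyA p)) (of_real a) + of_real t * poly (pderiv (polyB p)) (of_real a))) powr r
                 * Ij p t a r powr r) powr (1 / r)
       \<and> (\<Sum>a\<in>real_roots_At p t.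
             norm (poly Q (of_real a)) powr r /
               norm (poly (pderiv (polyA p)) (of_real a) + of_real t * poly (pderiv (polyB p)) (of_real a)) powr r
             * Ij p t a r powr r) powr (1 / r)
         \<le> Lp_norm_pi r (\<lambda>y. poly Q (of_real y) / poly p (of_real y)) *
           (\<Sum>a\<in>real_roots_At p t.
             norm (poly (polyB p) (of_real a)) powr r /
               norm (poly (pderiv (polyA p)) (of_real a) + of_real t * poly (pderiv (polyB p)) (of_real a)) powr r
             * Ij p t a r powr r * Ij p t a r' powr r) powr (1 / r)"
proof -
  have nz: "\<And>z. Im z \<ge> 0 \<Longrightarrow> poly p z \<noteq> 0"
    using nozero by blast
  have degQ': "degree Q < degree p"
    using degQ degp by simp
  have "poly (pderiv (polyA p)) x + of_real t * poly (pderiv (polyB p)) x = poly (pderiv (polyF p t)) x"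
    for x
    by (simp add: polyF_def pderiv_add pderiv_smult)
  moreover have "Ij p t a s = Lp_norm_pi s (\<lambda>y. poly (polyF p t) y / ((of_real y - of_real a) * poly p y))"
    for a s
    by (simp add: Ij_def polyF_def)
  ultimately show ?thesis
    using Lp_norm_pi_le_interpolation[OF monic nz degQ' r1 conj, of t]
          sum_nodes_le_Lp_norm_pi[OF nz degQ' r1 conj, of t] degp
    by simp
qed

end
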